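(* Let $J$ be an arbitrary graph and let $m\ge\chi(J)$ be an integer. Then there exists a graph $G$ such that (1) $J$ is an induced subgraph of $G$; (2) $\dim_l(G)=m$; and (3) there exists a local metric basis $B$ of $G$ with $B\cap V(J)=\emptyset$.
   Context: $\chi(J)$ is the chromatic number of $J$. For a connected graph $G$, a vertex $w$ distinguishes an edge $uv$ if $d(w,u)\neq d(w,v)$ (shortest-path distance); a local metric basis of $G$ is a minimum-size set of vertices such that every edge of $G$ is distinguished by one of them, and $\dim_l(G)$ is its size. *)

theory Defs
  imports Main
begin

type_synonym 'a graph = "'a set \<times> 'a set set"

definition verts :: "'a graph \<Rightarrow> 'a set" where "verts G = fst G"
definition edges :: "'a graph \<Rightarrow> 'a set set" where "edges G = snd G"

definition adj :: "'a graph \<Rightarrow> 'a \<Rightarrow> 'a \<Rightarrow> bool" where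
  "adj G u v \<longleftrightarrow> {u, v} \<in> edges G"

definition simple_graph :: "'a graph \<Rightarrow> bool" where
  "simple_graph G \<longleftrightarrow> finite (verts G) \<and>
     (\<forall>e\<in>edges G. \<exists>u v. u \<noteq> v \<and> u \<in> verts G \<and> v \<in> verts G \<and> e = {u, v})"

definition chromatic_number :: "'a graph \<Rightarrow> nat" where
  "chromatic_number G = (LEAST k. \<exists>c :: 'a \<Rightarrow> nat.
      (\<forall>v\<in>verts G. c v < k) \<and> (\<forall>u\<in>verts G. \<forall>v\<in>verts G. adj G u v \<longrightarrow> c u \<noteq> c v))"

definition walk :: "'a graph \<Rightarrow> 'a list \<Rightarrow> bool" where
  "walk G p \<longleftrightarrow> p \<noteq> [] \<and> set p \<subseteq> verts G \<and>
     (\<forall>i. Suc i < length p \<longrightarrow> adj G (p ! i) (p ! Suc i))"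

definition connected_graph :: "'a graph \<Rightarrow> bool" where
  "connected_graph G \<longleftrightarrow> verts G \<noteq> {} \<and>
     (\<forall>u\<in>verts G. \<forall>v\<in>verts G. \<exists>p. walk G p \<and> hd p = u \<and> last p = v)"

definition dist :: "'a graph \<Rightarrow> 'a \<Rightarrow> 'a \<Rightarrow> nat" where
  "dist G u v = (LEAST n. \<exists>p. walk G p \<and> hd p = u \<and> last p = v \<and> length p = Suc n)"

definition local_resolving :: "'a graph \<Rightarrow> 'a set \<Rightarrow> bool" where
  "local_resolving G W \<longleftrightarrow> W \<subseteq> verts G \<and>
     (\<forall>u\<in>verts G. \<forall>v\<in>verts G. adj G u v \<longrightarrow> (\<exists>w\<in>W. dist G w u \<noteq> dist G w v))"

definition local_metric_dim :: "'a graph \<Rightarrow> nat" where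
  "local_metric_dim G = (LEAST k. \<exists>W. local_resolving G W \<and> card W = k)"

definition local_metric_basis :: "'a graph \<Rightarrow> 'a set \<Rightarrow> bool" where
  "local_metric_basis G B \<longleftrightarrow> local_resolving G B \<and> card B = local_metric_dim G"

definition induced_embedding :: "'a graph \<Rightarrow> 'b graph \<Rightarrow> ('a \<Rightarrow> 'b) \<Rightarrow> bool" where
  "induced_embedding J G f \<longleftrightarrow> inj_on f (verts J) \<and> f ` verts J \<subseteq> verts G \<and>
     (\<forall>u\<in>verts J. \<forall>v\<in>verts J. adj J u v \<longleftrightarrow> adj G (f u) (f v))"

end

theory Submission
  imports Defs
begin

(*
  Colour J properly with colours below m and relabel it on {..<N}. For m \<ge> 3 add m pairs of
  adjacent true twins and join every vertex of colour c to all pairs except the c-th. Any vertex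
  outside a twin pair is equidistant from both twins, so every local resolving set meets each pair
  and dim_l \<ge> m. Conversely the m even twins resolve every edge: an edge xy of J is resolved by
  the twin of the pair indexed by the colour of y, and an edge from x into a pair by a twin of a
  third pair missing the colour of x. Small m are handled directly: a single vertex (m = 0), a
  star (m = 1), and for m = 2 a triangle hub whose vertex i receives the vertices of colour i,
  using that no single vertex resolves the edges of a triangle.
*)

section \<open>Walks and distances\<close>

lemma adj_sym: "adj G u v \<longleftrightarrow> adj G v u"
  by (simp add: adj_def insert_commute)

lemma adj_irrefl: "simple_graph G \<Longrightarrow> \<not> adj G u u"
  unfolding simple_graph_def adj_def by (metis doubleton_eq_iff insert_absorb2)

lemma adj_in_verts: "simple_graph G \<Longrightarrow> adj G u v \<Longrightarrow> u \<in> verts G \<and> v \<in> verts G"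
  unfolding simple_graph_def adj_def by (metis doubleton_eq_iff)

lemma walk_snoc_iff:
  assumes "q \<noteq> []"
  shows "walk G (q @ [x]) \<longleftrightarrow> walk G q \<and> x \<in> verts G \<and> adj G (last q) x"
proof -
  have "(\<forall>i. Suc i < length (q @ [x]) \<longrightarrow> adj G ((q @ [x]) ! i) ((q @ [x]) ! Suc i)) \<longleftrightarrow>
        (\<forall>i. Suc i < length q \<longrightarrow> adj G (q ! i) (q ! Suc i)) \<and> adj G (last q) x"
    (is "?L \<longleftrightarrow> ?R")
  proof
    assume L: ?L
    have "adj G (q ! i) (q ! Suc i)" if "Suc i < length q" for i
      using L[rule_format, of i] that by (simp add: nth_append)
    moreover have "adj G (last q) x"
      using L[rule_format, of "length q - 1"] assms by (simp add: nth_append last_conv_nth)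
    ultimately show ?R by blast
  next
    assume R: ?R
    show ?L
    proof (intro allI impI)
      fix i assume "Suc i < length (q @ [x])"
      then consider "Suc i < length q" | "i = length q - 1" by fastforce
      then show "adj G ((q @ [x]) ! i) ((q @ [x]) ! Suc i)"
        by cases (use R assms in \<open>auto simp: nth_append last_conv_nth\<close>)
    qed
  qed
  then show ?thesis using assms by (auto simp: walk_def)
qed

lemma dist_shortest_walk:
  assumes "connected_graph G" "u \<in> verts G" "v \<in> verts G"
  shows "\<exists>p. walk G p \<and> hd p = u \<and> last p = v \<and> length p = Suc (dist G u v)"
proof -
  obtain p where p: "walk G p" "hd p = u" "last p = v"
    using assms by (auto simp: connected_graph_def)
  then have "length p = Suc (length p - 1)" by (cases p) (auto simp: walk_def)
  with p have "\<exists>n p. walk G p \<and> hd p = u \<and> last p = v \<and> length p = Suc n" by blast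
  then show ?thesis unfolding dist_def by (rule LeastI_ex)
qed

lemma dist_le_walk_length:
  assumes "walk G p" "hd p = u" "last p = v" "length p = Suc n"
  shows "dist G u v \<le> n"
  unfolding dist_def using assms by (intro Least_le) blast

lemma dist_self: "u \<in> verts G \<Longrightarrow> dist G u u = 0"
  using dist_le_walk_length[of G "[u]" u u 0] by (simp add: walk_def)

lemma dist_eq_0D:
  assumes "connected_graph G" "u \<in> verts G" "v \<in> verts G" "dist G u v = 0"
  shows "u = v"
  using dist_shortest_walk[OF assms(1-3)] assms(4) by (auto simp: length_Suc_conv)

lemma dist_adj:
  assumes sg: "simple_graph G" and cg: "connected_graph G" and uv: "adj G u v"
  shows "dist G u v = 1"
proof -
  have u_v: "u \<in> verts G" "v \<in> verts G" "u \<noteq> v"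
    using adj_in_verts[OF sg uv] adj_irrefl[OF sg] uv by auto
  have "walk G [u, v]" using u_v uv by (auto simp: walk_def nth_Cons split: nat.splits)
  then have "dist G u v \<le> 1" by (intro dist_le_walk_length[of G "[u, v]"]) auto
  moreover have "dist G u v \<noteq> 0" using dist_eq_0D[OF cg u_v(1,2)] u_v(3) by blast
  ultimately show ?thesis by simp
qed

lemma adj_if_dist_eq_1:
  assumes "connected_graph G" "u \<in> verts G" "v \<in> verts G" "dist G u v = 1"
  shows "adj G u v"
proof -
  obtain p where p: "walk G p" "hd p = u" "last p = v" "length p = 2"
    using dist_shortest_walk[OF assms(1-3)] assms(4) by auto
  then obtain a b where "p = [a, b]" by (auto simp: length_Suc_conv numeral_2_eq_2)
  with p show ?thesis by (auto simp: walk_def)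
qed

lemma dist_le_Suc_dist_adj:
  assumes sg: "simple_graph G" and cg: "connected_graph G" and w: "w \<in> verts G"
    and ab: "adj G a b"
  shows "dist G w b \<le> Suc (dist G w a)"
proof -
  have a_b: "a \<in> verts G" "b \<in> verts G" using adj_in_verts[OF sg ab] by auto
  obtain p where p: "walk G p" "hd p = w" "last p = a" "length p = Suc (dist G w a)"
    using dist_shortest_walk[OF cg w a_b(1)] by auto
  have p_ne: "p \<noteq> []" using p by (auto simp: walk_def)
  have "walk G (p @ [b])" using walk_snoc_iff[OF p_ne] p a_b ab by simp
  then show ?thesis using p_ne p by (intro dist_le_walk_length[of G "p @ [b]"]) auto
qed

text \<open>Adjacent true twins: a shortest walk from an outside vertex to one of them can be
  redirected to the other at its last step.\<close>

lemma dist_true_twin_le: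
  assumes sg: "simple_graph G" and cg: "connected_graph G"
    and twins: "\<And>y. y \<noteq> u \<Longrightarrow> y \<noteq> v \<Longrightarrow> adj G u y \<longleftrightarrow> adj G v y"
    and uv: "adj G u v" and w: "w \<in> verts G" "w \<noteq> u"
  shows "dist G w v \<le> dist G w u"
proof -
  have u_v: "u \<in> verts G" "v \<in> verts G" using adj_in_verts[OF sg uv] by auto
  obtain p where p: "walk G p" "hd p = w" "last p = u" "length p = Suc (dist G w u)"
    using dist_shortest_walk[OF cg w(1) u_v(1)] by auto
  obtain q where q: "p = q @ [u]"
    using p by (metis append_butlast_last_id walk_def)
  have q_ne: "q \<noteq> []" using q p w(2) by auto
  have q_walk: "walk G q" "adj G (last q) u" "hd q = w"
    using walk_snoc_iff[OF q_ne] p q q_ne by auto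
  show ?thesis
  proof (cases "last q = v")
    case True
    have "dist G w v \<le> length q - 1"
      using q_ne q_walk True by (intro dist_le_walk_length[of G q]) auto
    then show ?thesis using q p by simp
  next
    case False
    have "last q \<noteq> u" using q_walk adj_irrefl[OF sg] by auto
    then have "adj G v (last q)" using twins[OF _ False] q_walk adj_sym by metis
    then have "walk G (q @ [v])" using walk_snoc_iff[OF q_ne] q_walk u_v adj_sym by metis
    then have "dist G w v \<le> length q"
      using q_ne q_walk by (intro dist_le_walk_length[of G "q @ [v]"]) auto
    then show ?thesis using q p by simp
  qed
qed

lemma dist_true_twins:
  assumes sg: "simple_graph G" and cg: "connected_graph G"
    and twins: "\<And>y. y \<noteq> u \<Longrightarrow> y \<noteq> v \<Longrightarrow> adj G u y \<longleftrightarrow> adj G v y"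
    and uv: "adj G u v" and w: "w \<in> verts G" "w \<noteq> u" "w \<noteq> v"
  shows "dist G w u = dist G w v"
  using dist_true_twin_le[OF sg cg twins uv w(1,2)]
    dist_true_twin_le[OF sg cg _ _ w(1,3), of u] twins uv adj_sym
  by (metis antisym)

lemma walk_if_rtranclp_adj:
  assumes sg: "simple_graph G" and "(adj G)\<^sup>*\<^sup>* u v" and u: "u \<in> verts G"
  shows "\<exists>p. walk G p \<and> hd p = u \<and> last p = v"
  using assms(2)
proof (induction rule: rtranclp_induct)
  case base
  then show ?case using u by (intro exI[of _ "[u]"]) (auto simp: walk_def)
next
  case (step y z)
  then obtain p where p: "walk G p" "hd p = u" "last p = y" by blast
  have p_ne: "p \<noteq> []" using p by (auto simp: walk_def)
  have "walk G (p @ [z])" using walk_snoc_iff[OF p_ne] p step(2) adj_in_verts[OF sg] by simp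
  then show ?case using p_ne p by (intro exI[of _ "p @ [z]"]) auto
qed

lemma connected_graphI_root:
  assumes sg: "simple_graph G" and r: "r \<in> verts G"
    and reach: "\<And>v. v \<in> verts G \<Longrightarrow> (adj G)\<^sup>*\<^sup>* r v"
  shows "connected_graph G"
  unfolding connected_graph_def
proof (intro conjI ballI)
  show "verts G \<noteq> {}" using r by auto
  fix u v assume u_v: "u \<in> verts G" "v \<in> verts G"
  have "(adj G)\<inverse>\<inverse> = adj G" by (auto simp: fun_eq_iff intro: iffD1[OF adj_sym])
  then have "(adj G)\<^sup>*\<^sup>* u r" using rtranclp_converseI[OF reach[OF u_v(1)]] by simp
  then have "(adj G)\<^sup>*\<^sup>* u v" using reach[OF u_v(2)] by simp
  then show "\<exists>p. walk G p \<and> hd p = u \<and> last p = v" using walk_if_rtranclp_adj[OF sg _ u_v(1)] by blast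
qed

section \<open>Local resolving sets\<close>

definition nbhd_resolves :: "'a graph \<Rightarrow> 'a set \<Rightarrow> 'a \<Rightarrow> 'a \<Rightarrow> bool" where
  "nbhd_resolves G W x y \<longleftrightarrow> (\<exists>w\<in>W. w = x \<or> w = y \<or> adj G w x \<noteq> adj G w y)"

lemma nbhd_resolves_sym: "nbhd_resolves G W x y \<longleftrightarrow> nbhd_resolves G W y x"
  unfolding nbhd_resolves_def by blast

lemma nbhd_resolvesI: "w \<in> W \<Longrightarrow> adj G w x \<Longrightarrow> \<not> adj G w y \<Longrightarrow> nbhd_resolves G W x y"
  unfolding nbhd_resolves_def by auto

lemma nbhd_resolves_endpoint: "x \<in> W \<or> y \<in> W \<Longrightarrow> nbhd_resolves G W x y"
  unfolding nbhd_resolves_def by auto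

lemma local_resolvingI_nbhd:
  assumes sg: "simple_graph G" and cg: "connected_graph G" and W: "W \<subseteq> verts G"
    and resolves: "\<And>x y. adj G x y \<Longrightarrow> nbhd_resolves G W x y"
  shows "local_resolving G W"
  unfolding local_resolving_def
proof (intro conjI ballI impI)
  fix x y assume x_y: "x \<in> verts G" "y \<in> verts G" and xy: "adj G x y"
  obtain w where w: "w \<in> W" and "w = x \<or> w = y \<or> adj G w x \<noteq> adj G w y"
    using resolves[OF xy] unfolding nbhd_resolves_def by blast
  moreover have w_V: "w \<in> verts G" using w W by auto
  ultimately consider "w = x" | "w = y" | "adj G w x \<noteq> adj G w y"
    by blast
  then have "dist G w x \<noteq> dist G w y"
  proof cases
    case 1
    then show ?thesis using dist_self[OF x_y(1)] dist_adj[OF sg cg xy] by simp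
  next
    case 2
    moreover have "adj G y x" using xy adj_sym by metis
    ultimately show ?thesis using dist_self[OF x_y(2)] dist_adj[OF sg cg] by simp
  next
    case 3
    show ?thesis
    proof (cases "adj G w x")
      case True
      then show ?thesis using 3 dist_adj[OF sg cg True] adj_if_dist_eq_1[OF cg w_V x_y(2)] by auto
    next
      case False
      then have "adj G w y" using 3 by simp
      then show ?thesis using dist_adj[OF sg cg] adj_if_dist_eq_1[OF cg w_V x_y(1)] False by auto
    qed
  qed
  with w show "\<exists>w\<in>W. dist G w x \<noteq> dist G w y" by blast
qed (fact W)

lemma local_resolving_subset: "local_resolving G W \<Longrightarrow> W \<subseteq> verts G"
  by (simp add: local_resolving_def)

lemma local_resolvingD:
  assumes "local_resolving G W" "simple_graph G" "adj G x y"
  shows "\<exists>w\<in>W. dist G w x \<noteq> dist G w y"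
  using assms adj_in_verts[OF assms(2,3)] by (simp add: local_resolving_def)

lemma local_resolving_finite: "simple_graph G \<Longrightarrow> local_resolving G W \<Longrightarrow> finite W"
  by (meson finite_subset local_resolving_subset simple_graph_def)

lemma local_resolving_meets_true_twins:
  assumes sg: "simple_graph G" and cg: "connected_graph G"
    and twins: "\<And>y. y \<noteq> u \<Longrightarrow> y \<noteq> v \<Longrightarrow> adj G u y \<longleftrightarrow> adj G v y"
    and uv: "adj G u v" and W: "local_resolving G W"
  shows "u \<in> W \<or> v \<in> W"
proof -
  obtain w where w: "w \<in> W" "dist G w u \<noteq> dist G w v"
    using local_resolvingD[OF W sg uv] by blast
  then have "w \<in> verts G" using local_resolving_subset[OF W] by blast
  then show ?thesis using dist_true_twins[OF sg cg twins uv] w by metis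
qed

text \<open>Distances from a fixed vertex to adjacent vertices differ by at most one, so they
  cannot be pairwise distinct on a triangle.\<close>

lemma triangle_not_locally_resolved_by_vertex:
  assumes sg: "simple_graph G" and cg: "connected_graph G"
    and ab: "adj G a b" and bc: "adj G b c" and ac: "adj G a c"
  shows "\<not> local_resolving G {z}"
proof
  assume W: "local_resolving G {z}"
  then have z: "z \<in> verts G" by (simp add: local_resolving_def)
  have differ: "dist G z x \<noteq> dist G z y" if "adj G x y" for x y
    using local_resolvingD[OF W sg that] by simp
  have near: "dist G z y \<le> Suc (dist G z x)" if "adj G x y" for x y
    using dist_le_Suc_dist_adj[OF sg cg z that] .
  have ba: "adj G b a" and cb: "adj G c b" and ca: "adj G c a"
    using ab bc ac by (simp_all add: adj_sym)
  show False
    using differ[OF ab] differ[OF bc] differ[OF ac] near[OF ab] near[OF ba]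
      near[OF bc] near[OF cb] near[OF ac] near[OF ca]
    by linarith
qed

lemma local_metric_dim_eqI:
  assumes "local_resolving G B" "card B = m"
    and "\<And>W. local_resolving G W \<Longrightarrow> m \<le> card W"
  shows "local_metric_dim G = m" "local_metric_basis G B"
proof -
  show "local_metric_dim G = m"
    unfolding local_metric_dim_def by (rule Least_equality) (use assms in auto)
  then show "local_metric_basis G B" using assms by (simp add: local_metric_basis_def)
qed

section \<open>Basis-avoiding extensions of a properly coloured graph\<close>

definition rel_graph :: "'b set \<Rightarrow> ('b \<Rightarrow> 'b \<Rightarrow> bool) \<Rightarrow> 'b graph" where
  "rel_graph V R = (V, {{x, y} | x y. x \<in> V \<and> y \<in> V \<and> R x y})"

lemma verts_rel_graph [simp]: "verts (rel_graph V R) = V"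
  by (simp add: rel_graph_def verts_def)

lemma adj_rel_graph:
  assumes "\<And>x y. R x y \<Longrightarrow> R y x"
  shows "adj (rel_graph V R) x y \<longleftrightarrow> x \<in> V \<and> y \<in> V \<and> R x y"
  unfolding adj_def rel_graph_def edges_def using assms by (auto simp: doubleton_eq_iff)

lemma simple_rel_graph:
  assumes "finite V" "\<And>x. \<not> R x x"
  shows "simple_graph (rel_graph V R)"
  unfolding simple_graph_def using assms by (auto simp: rel_graph_def edges_def verts_def) metis

locale coloured_nat_graph =
  fixes N m :: nat and RJ :: "nat \<Rightarrow> nat \<Rightarrow> bool" and col :: "nat \<Rightarrow> nat"
  assumes RJ_sym: "RJ x y \<Longrightarrow> RJ y x"
    and RJ_proper: "RJ x y \<Longrightarrow> x < N \<and> y < N \<and> col x \<noteq> col y"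
    and col_less: "x < N \<Longrightarrow> col x < m"
begin

definition basis_avoiding_extension :: "nat graph \<Rightarrow> nat set \<Rightarrow> bool" where
  "basis_avoiding_extension G B \<longleftrightarrow> simple_graph G \<and> connected_graph G \<and> {..<N} \<subseteq> verts G \<and>
     (\<forall>x<N. \<forall>y<N. adj G x y \<longleftrightarrow> RJ x y) \<and>
     local_metric_dim G = m \<and> local_metric_basis G B \<and> B \<inter> {..<N} = {}"

lemma basis_avoiding_extensionI:
  assumes fin: "finite V" and R_sym: "\<And>x y. R x y \<Longrightarrow> R y x" and R_irrefl: "\<And>x. \<not> R x x"
    and V: "{..<N} \<subseteq> V" and R_RJ: "\<And>x y. x < N \<Longrightarrow> y < N \<Longrightarrow> R x y \<longleftrightarrow> RJ x y"
    and cg: "connected_graph (rel_graph V R)"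
    and B: "local_resolving (rel_graph V R) B" "card B = m" "B \<inter> {..<N} = {}"
    and lower: "\<And>W. local_resolving (rel_graph V R) W \<Longrightarrow> m \<le> card W"
  shows "basis_avoiding_extension (rel_graph V R) B"
proof -
  have "simple_graph (rel_graph V R)" using fin R_irrefl by (rule simple_rel_graph)
  moreover have "adj (rel_graph V R) x y \<longleftrightarrow> RJ x y" if "x < N" "y < N" for x y
  proof -
    have "adj (rel_graph V R) x y \<longleftrightarrow> x \<in> V \<and> y \<in> V \<and> R x y"
      by (rule adj_rel_graph) (rule R_sym)
    then show ?thesis using R_RJ[OF that] V that by auto
  qed
  ultimately show ?thesis
    using cg local_metric_dim_eqI[OF B(1,2) lower] B(3) V
    unfolding basis_avoiding_extension_def by simp
qed

lemma basis_avoiding_extension_point: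
  assumes "m = 0"
  shows "basis_avoiding_extension (rel_graph {0} (\<lambda>_ _. False)) {}"
proof -
  have "N = 0" using col_less[of 0] assms by (cases N) auto
  moreover have "connected_graph (rel_graph {0::nat} (\<lambda>_ _. False))"
    by (rule connected_graphI_root[of _ 0]) (auto intro: simple_rel_graph)
  moreover have "local_resolving (rel_graph {0::nat} (\<lambda>_ _. False)) {}"
    by (simp add: local_resolving_def adj_rel_graph)
  ultimately show ?thesis using assms by (intro basis_avoiding_extensionI) auto
qed

definition star_graph :: "nat graph" where
  "star_graph = rel_graph {..<N + 2} (\<lambda>x y. (x = N) \<noteq> (y = N))"

lemma verts_star_graph [simp]: "verts star_graph = {..<N + 2}"
  by (simp add: star_graph_def)

lemma adj_star_graph: "adj star_graph x y \<longleftrightarrow> x < N + 2 \<and> y < N + 2 \<and> (x = N) \<noteq> (y = N)"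
  unfolding star_graph_def by (subst adj_rel_graph) auto

lemma basis_avoiding_extension_star:
  assumes m: "m = 1"
  shows "basis_avoiding_extension star_graph {N}"
proof -
  have sg: "simple_graph star_graph" unfolding star_graph_def by (rule simple_rel_graph) auto
  have cg: "connected_graph star_graph"
  proof (rule connected_graphI_root[OF sg, of N])
    fix v assume "v \<in> verts star_graph"
    then show "(adj star_graph)\<^sup>*\<^sup>* N v" by (cases "v = N") (auto simp: adj_star_graph)
  qed simp
  have "local_resolving star_graph {N}"
    by (rule local_resolvingI_nbhd[OF sg cg]) (auto simp: adj_star_graph nbhd_resolves_def)
  moreover have "1 \<le> card W" if W: "local_resolving star_graph W" for W
  proof -
    have "W \<noteq> {}" using local_resolvingD[OF W sg, of N "N + 1"] by (auto simp: adj_star_graph)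
    then show ?thesis using local_resolving_finite[OF sg W] by (simp add: Suc_le_eq card_gt_0_iff)
  qed
  moreover have "\<not> RJ x y" for x y
    using RJ_proper col_less m by fastforce
  ultimately show ?thesis
    using cg m unfolding star_graph_def by (intro basis_avoiding_extensionI) auto
qed

text \<open>Inside the vertex set \<open>{..<N + 3}\<close>, the last disjunct is the triangle on \<open>N\<close>, \<open>N + 1\<close>,
  \<open>N + 2\<close>.\<close>

definition triangle_rel :: "nat \<Rightarrow> nat \<Rightarrow> bool" where
  "triangle_rel x y \<longleftrightarrow> RJ x y \<or> (x < N \<and> y = N + col x) \<or> (y < N \<and> x = N + col y) \<or>
     (N \<le> x \<and> N \<le> y \<and> x \<noteq> y)"

definition triangle_graph :: "nat graph" where
  "triangle_graph = rel_graph {..<N + 3} triangle_rel"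

lemma triangle_rel_sym: "triangle_rel x y \<Longrightarrow> triangle_rel y x"
  unfolding triangle_rel_def using RJ_sym by blast

lemma triangle_rel_irrefl: "\<not> triangle_rel x x"
  unfolding triangle_rel_def using RJ_proper by auto

lemma verts_triangle_graph [simp]: "verts triangle_graph = {..<N + 3}"
  by (simp add: triangle_graph_def)

lemma adj_triangle_graph:
  "adj triangle_graph x y \<longleftrightarrow> x < N + 3 \<and> y < N + 3 \<and> triangle_rel x y"
proof -
  have "adj triangle_graph x y \<longleftrightarrow> x \<in> {..<N + 3} \<and> y \<in> {..<N + 3} \<and> triangle_rel x y"
    unfolding triangle_graph_def by (rule adj_rel_graph) (erule triangle_rel_sym)
  then show ?thesis by simp
qed

lemma simple_triangle_graph: "simple_graph triangle_graph"
  unfolding triangle_graph_def by (rule simple_rel_graph) (auto simp: triangle_rel_irrefl)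

context
  assumes m: "m = 2"
begin

lemma triangle_graph_adj_colour_vertex: "x < N \<Longrightarrow> adj triangle_graph x (N + col x)"
  using col_less[of x] m by (auto simp: adj_triangle_graph triangle_rel_def)

lemma connected_triangle_graph: "connected_graph triangle_graph"
proof (rule connected_graphI_root[OF simple_triangle_graph, of N])
  have hub: "(adj triangle_graph)\<^sup>*\<^sup>* N v" if "N \<le> v" "v < N + 3" for v
    using that by (cases "v = N") (auto simp: adj_triangle_graph triangle_rel_def)
  fix v assume "v \<in> verts triangle_graph"
  then consider "v < N" | "N \<le> v" "v < N + 3" by fastforce
  then show "(adj triangle_graph)\<^sup>*\<^sup>* N v"
  proof cases
    case 1
    have "adj triangle_graph (N + col v) v"
      using triangle_graph_adj_colour_vertex[OF 1] adj_sym by metis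
    moreover have "col v < 3" using col_less[OF 1] m by simp
    ultimately show ?thesis using hub[of "N + col v"] by (simp add: rtranclp.rtrancl_into_rtrancl)
  qed (rule hub)
qed simp

lemma local_resolving_triangle_graph: "local_resolving triangle_graph {N, N + 1}"
proof (rule local_resolvingI_nbhd[OF simple_triangle_graph connected_triangle_graph])
  fix x y assume xy: "adj triangle_graph x y"
  show "nbhd_resolves triangle_graph {N, N + 1} x y"
  proof (cases "RJ x y")
    case True
    then have c: "x < N" "y < N" "col x \<noteq> col y" using RJ_proper by auto
    have "adj triangle_graph (N + col x) x"
      using triangle_graph_adj_colour_vertex[OF c(1)] adj_sym by metis
    moreover have "\<not> adj triangle_graph (N + col x) y"
      using c RJ_proper by (auto simp: adj_triangle_graph triangle_rel_def)
    moreover have "N + col x \<in> {N, N + 1}" using col_less[OF c(1)] m by auto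
    ultimately show ?thesis by (rule nbhd_resolvesI[rotated])
  next
    case False
    then have "x \<in> {N, N + 1} \<or> y \<in> {N, N + 1}"
      using xy col_less[of x] col_less[of y] m by (auto simp: adj_triangle_graph triangle_rel_def)
    then show ?thesis by (rule nbhd_resolves_endpoint)
  qed
qed simp

lemma card_local_resolving_triangle_graph:
  assumes W: "local_resolving triangle_graph W"
  shows "2 \<le> card W"
proof (rule ccontr)
  have triangle: "adj triangle_graph N (N + 1)" "adj triangle_graph (N + 1) (N + 2)"
    "adj triangle_graph N (N + 2)"
    by (auto simp: adj_triangle_graph triangle_rel_def)
  assume "\<not> 2 \<le> card W"
  moreover have "W \<noteq> {}" using local_resolvingD[OF W simple_triangle_graph triangle(1)] by blast
  then have "card W \<noteq> 0" using local_resolving_finite[OF simple_triangle_graph W] by simp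
  ultimately have "card W = 1" by linarith
  then obtain z where "W = {z}" by (rule card_1_singletonE)
  then show False
    using W triangle_not_locally_resolved_by_vertex[OF simple_triangle_graph connected_triangle_graph
        triangle]
    by simp
qed

lemma basis_avoiding_extension_triangle: "basis_avoiding_extension triangle_graph {N, N + 1}"
  unfolding triangle_graph_def
proof (rule basis_avoiding_extensionI)
  show "triangle_rel x y \<longleftrightarrow> RJ x y" if "x < N" "y < N" for x y
    using that by (auto simp: triangle_rel_def)
qed (use connected_triangle_graph local_resolving_triangle_graph card_local_resolving_triangle_graph m
  in \<open>auto simp: triangle_graph_def triangle_rel_irrefl intro: triangle_rel_sym\<close>)

end

text \<open>Vertex \<open>twin b\<close> belongs to pair \<open>b div 2\<close>. The vertices \<open>N\<close> and \<open>N + 1\<close>, of colours 0 and 1,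
  are not in \<open>J\<close>; they only serve to make the graph connected.\<close>

definition twin :: "nat \<Rightarrow> nat" where
  "twin b = N + 2 + b"

definition low_colour :: "nat \<Rightarrow> nat" where
  "low_colour x = (if x < N then col x else x - N)"

definition twin_rel :: "nat \<Rightarrow> nat \<Rightarrow> bool" where
  "twin_rel x y \<longleftrightarrow> RJ x y \<or>
     (x < N + 2 \<and> (\<exists>b. y = twin b \<and> low_colour x \<noteq> b div 2)) \<or>
     (y < N + 2 \<and> (\<exists>b. x = twin b \<and> low_colour y \<noteq> b div 2)) \<or>
     (\<exists>a b. x = twin a \<and> y = twin b \<and> a div 2 = b div 2 \<and> a \<noteq> b)"

definition twin_graph :: "nat graph" where
  "twin_graph = rel_graph {..<N + 2 + 2 * m} twin_rel"

lemma twin_inject [simp]: "twin a = twin b \<longleftrightarrow> a = b"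
  by (simp add: twin_def)

lemma twin_minus: "N + 2 \<le> x \<Longrightarrow> twin (x - (N + 2)) = x"
  by (simp add: twin_def)

lemma twin_rel_sym: "twin_rel x y \<Longrightarrow> twin_rel y x"
  unfolding twin_rel_def using RJ_sym by metis

lemma twin_rel_irrefl: "\<not> twin_rel x x"
  by (auto simp: twin_rel_def twin_def dest: RJ_proper)

lemma verts_twin_graph [simp]: "verts twin_graph = {..<N + 2 + 2 * m}"
  by (simp add: twin_graph_def)

lemma adj_twin_graph: "adj twin_graph x y \<longleftrightarrow> x < N + 2 + 2 * m \<and> y < N + 2 + 2 * m \<and> twin_rel x y"
proof -
  have "adj twin_graph x y \<longleftrightarrow> x \<in> {..<N + 2 + 2 * m} \<and> y \<in> {..<N + 2 + 2 * m} \<and> twin_rel x y"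
    unfolding twin_graph_def by (rule adj_rel_graph) (erule twin_rel_sym)
  then show ?thesis by simp
qed

lemma simple_twin_graph: "simple_graph twin_graph"
  unfolding twin_graph_def by (rule simple_rel_graph) (auto simp: twin_rel_irrefl)

lemma twin_graph_vertex_cases:
  assumes "v \<in> verts twin_graph"
  obtains "v < N + 2" | b where "b < 2 * m" "v = twin b"
proof (cases "v < N + 2")
  case False
  then show ?thesis using assms twin_minus[of v] that(2)[of "v - (N + 2)"] by simp
qed (rule that(1))

lemma adj_twin_graph_low:
  "x < N + 2 \<Longrightarrow> y < N + 2 \<Longrightarrow> adj twin_graph x y \<longleftrightarrow> RJ x y"
  using RJ_proper by (auto simp: adj_twin_graph twin_rel_def twin_def)

lemma adj_twin_graph_low_twin:
  "x < N + 2 \<Longrightarrow> adj twin_graph x (twin b) \<longleftrightarrow> b < 2 * m \<and> low_colour x \<noteq> b div 2"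
  using RJ_proper[of x "twin b"] RJ_proper[of "twin b" x]
  by (auto simp: adj_twin_graph twin_rel_def twin_def)

lemma adj_twin_graph_twins:
  "adj twin_graph (twin a) (twin b) \<longleftrightarrow> a < 2 * m \<and> b < 2 * m \<and> a div 2 = b div 2 \<and> a \<noteq> b"
  using RJ_proper[of "twin a" "twin b"] by (auto simp: adj_twin_graph twin_rel_def twin_def)

lemma twin_graph_pair_adj: "i < m \<Longrightarrow> adj twin_graph (twin (2 * i)) (twin (Suc (2 * i)))"
  by (simp add: adj_twin_graph_twins)

lemma twin_graph_true_twins:
  assumes i: "i < m" and y: "y \<noteq> twin (2 * i)" "y \<noteq> twin (Suc (2 * i))"
  shows "adj twin_graph (twin (2 * i)) y \<longleftrightarrow> adj twin_graph (twin (Suc (2 * i))) y"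
proof (cases "y < N + 2")
  case True
  then show ?thesis using i by (simp add: adj_sym[of _ _ y] adj_twin_graph_low_twin)
next
  case False
  then obtain b where "y = twin b" using twin_minus by (metis not_less)
  then show ?thesis using i y by (auto simp: adj_twin_graph_twins)
qed

definition twin_basis :: "nat set" where
  "twin_basis = (\<lambda>i. twin (2 * i)) ` {..<m}"

lemma twin_in_twin_basis: "b < 2 * m \<Longrightarrow> even b \<Longrightarrow> twin b \<in> twin_basis"
  unfolding twin_basis_def by (auto elim!: evenE)

lemma twin_graph_pair_cases:
  assumes "b < 2 * m"
  obtains i where "i < m" "b = 2 * i \<or> b = Suc (2 * i)"
proof -
  have "b div 2 < m" "b = 2 * (b div 2) \<or> b = Suc (2 * (b div 2))" using assms by presburger+
  then show ?thesis by (rule that)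
qed

lemma twin_graph_reaches_pair:
  assumes m: "3 \<le> m" and j: "j < m"
  shows "(adj twin_graph)\<^sup>*\<^sup>* N (twin (2 * j))"
proof (cases "j = 0")
  case False
  then show ?thesis using j by (simp add: adj_twin_graph_low_twin low_colour_def r_into_rtranclp)
next
  case True
  have "adj twin_graph N (twin 4)" "adj twin_graph (twin 4) (N + 1)" "adj twin_graph (N + 1) (twin 0)"
    using m by (simp_all add: adj_twin_graph_low_twin adj_sym[of _ "twin 4"] low_colour_def)
  then have "(adj twin_graph)\<^sup>*\<^sup>* N (twin 0)"
    by (meson rtranclp.rtrancl_into_rtrancl r_into_rtranclp)
  then show ?thesis using True by simp
qed

lemma connected_twin_graph:
  assumes m: "3 \<le> m"
  shows "connected_graph twin_graph"
proof (rule connected_graphI_root[OF simple_twin_graph, of N])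
  fix v assume "v \<in> verts twin_graph"
  then show "(adj twin_graph)\<^sup>*\<^sup>* N v"
  proof (cases rule: twin_graph_vertex_cases)
    case 1
    define j where "j = (if low_colour v = 0 then 1 else 0 :: nat)"
    have j: "j < m" "low_colour v \<noteq> j" using m unfolding j_def by auto
    then have "adj twin_graph (twin (2 * j)) v"
      using 1 by (simp add: adj_sym[of _ _ v] adj_twin_graph_low_twin)
    then show ?thesis by (rule rtranclp.rtrancl_into_rtrancl[OF twin_graph_reaches_pair[OF m j(1)]])
  next
    case (2 b)
    obtain i where "i < m" "b = 2 * i \<or> b = Suc (2 * i)"
      using 2(1) by (rule twin_graph_pair_cases)
    then show ?thesis using 2 twin_graph_reaches_pair[OF m] twin_graph_pair_adj
      by (metis rtranclp.rtrancl_into_rtrancl)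
  qed
qed simp

text \<open>An edge from a vertex \<open>x < N + 2\<close> into pair \<open>b div 2\<close> is resolved by the even twin of a
  third pair avoiding the colour of \<open>x\<close>; this is where \<open>m \<ge> 3\<close> is needed.\<close>

lemma nbhd_resolves_twin_graph_low:
  assumes m: "3 \<le> m" and x: "x < N + 2" and xy: "adj twin_graph x y"
  shows "nbhd_resolves twin_graph twin_basis x y"
proof -
  have "y \<in> verts twin_graph" using adj_in_verts[OF simple_twin_graph xy] by blast
  then show ?thesis
  proof (cases rule: twin_graph_vertex_cases)
    case 1
    then have c: "x < N" "y < N" "col x \<noteq> col y"
      using xy RJ_proper by (simp_all add: adj_twin_graph_low[OF x])
    have "col y < m" using col_less[OF c(2)] .
    then have "twin (2 * col y) \<in> twin_basis" by (simp add: twin_in_twin_basis)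
    moreover have "adj twin_graph (twin (2 * col y)) x"
      using c \<open>col y < m\<close> by (subst adj_sym) (simp add: adj_twin_graph_low_twin[OF x] low_colour_def)
    moreover have "\<not> adj twin_graph (twin (2 * col y)) y"
      using c 1 by (subst adj_sym) (simp add: adj_twin_graph_low_twin low_colour_def)
    ultimately show ?thesis by (rule nbhd_resolvesI)
  next
    case (2 b)
    show ?thesis
    proof (cases "even b")
      case True
      then show ?thesis using 2 by (intro nbhd_resolves_endpoint) (simp add: twin_in_twin_basis)
    next
      case False
      have "\<exists>j::nat < 3. j \<noteq> p \<and> j \<noteq> q" for p q :: nat by presburger
      then obtain j :: nat where j: "j < 3" "j \<noteq> b div 2" "j \<noteq> low_colour x" by blast
      have "twin (2 * j) \<in> twin_basis" using j m by (simp add: twin_in_twin_basis)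
      moreover have "adj twin_graph (twin (2 * j)) x"
        using j m by (subst adj_sym) (simp add: adj_twin_graph_low_twin[OF x])
      moreover have "\<not> adj twin_graph (twin (2 * j)) y" using j 2 by (simp add: adj_twin_graph_twins)
      ultimately show ?thesis by (rule nbhd_resolvesI)
    qed
  qed
qed

lemma local_resolving_twin_graph:
  assumes m: "3 \<le> m"
  shows "local_resolving twin_graph twin_basis"
proof (rule local_resolvingI_nbhd[OF simple_twin_graph connected_twin_graph[OF m]])
  show "twin_basis \<subseteq> verts twin_graph" by (auto simp: twin_basis_def twin_def)
  fix x y assume xy: "adj twin_graph x y"
  have yx: "adj twin_graph y x" using xy by (subst adj_sym)
  show "nbhd_resolves twin_graph twin_basis x y"
  proof (cases "x < N + 2")
    case True
    then show ?thesis by (rule nbhd_resolves_twin_graph_low[OF m _ xy])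
  next
    case x_high: False
    show ?thesis
    proof (cases "y < N + 2")
      case True
      then show ?thesis by (subst nbhd_resolves_sym) (rule nbhd_resolves_twin_graph_low[OF m _ yx])
    next
      case y_high: False
      obtain a b where ab: "x = twin a" "y = twin b"
        using x_high y_high twin_minus by (metis not_less)
      then have "a < 2 * m" "b < 2 * m" "a div 2 = b div 2" "a \<noteq> b"
        using xy by (simp_all add: adj_twin_graph_twins)
      moreover have "even a \<or> even b" using calculation by presburger
      ultimately show ?thesis using ab by (intro nbhd_resolves_endpoint) (auto simp: twin_in_twin_basis)
    qed
  qed
qed

lemma card_local_resolving_twin_graph:
  assumes cg: "connected_graph twin_graph" and W: "local_resolving twin_graph W"
  shows "m \<le> card W"
proof -
  let ?pair = "\<lambda>z. (z - (N + 2)) div 2"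
  have "{..<m} \<subseteq> ?pair ` W"
  proof
    fix i assume "i \<in> {..<m}"
    then have "twin (2 * i) \<in> W \<or> twin (Suc (2 * i)) \<in> W"
      by (intro local_resolving_meets_true_twins[OF simple_twin_graph cg twin_graph_true_twins
            twin_graph_pair_adj W]) auto
    moreover have "?pair (twin (2 * i)) = i" "?pair (twin (Suc (2 * i))) = i"
      by (simp_all add: twin_def)
    ultimately show "i \<in> ?pair ` W" by (metis image_eqI)
  qed
  then have "card {..<m} \<le> card (?pair ` W)"
    using local_resolving_finite[OF simple_twin_graph W] by (intro card_mono) auto
  also have "\<dots> \<le> card W" using local_resolving_finite[OF simple_twin_graph W] by (rule card_image_le)
  finally show ?thesis by simp
qed

lemma basis_avoiding_extension_twin_graph:
  assumes m: "3 \<le> m"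
  shows "basis_avoiding_extension twin_graph twin_basis"
  unfolding twin_graph_def
proof (rule basis_avoiding_extensionI)
  show "twin_rel x y \<longleftrightarrow> RJ x y" if "x < N" "y < N" for x y
    using that by (auto simp: twin_rel_def twin_def)
  show "card twin_basis = m"
    unfolding twin_basis_def by (subst card_image) (auto simp: inj_on_def)
  show "twin_basis \<inter> {..<N} = {}"
    by (auto simp: twin_basis_def twin_def)
  show "m \<le> card W" if "local_resolving (rel_graph {..<N + 2 + 2 * m} twin_rel) W" for W
    using card_local_resolving_twin_graph[OF connected_twin_graph[OF m]] that
    by (simp add: twin_graph_def)
qed (use connected_twin_graph[OF m] local_resolving_twin_graph[OF m] twin_rel_sym twin_rel_irrefl
  in \<open>simp_all add: twin_graph_def\<close>)

lemma basis_avoiding_extension_exists: "\<exists>G B. basis_avoiding_extension G B"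
proof -
  consider "m = 0" | "m = 1" | "m = 2" | "3 \<le> m" by linarith
  then show ?thesis
    by cases (use basis_avoiding_extension_point basis_avoiding_extension_star
      basis_avoiding_extension_triangle basis_avoiding_extension_twin_graph in blast)+
qed

end

lemma proper_colouring_le_chromatic_number:
  assumes "simple_graph J" "chromatic_number J \<le> m"
  obtains c :: "'a \<Rightarrow> nat" where "\<forall>v\<in>verts J. c v < m"
    and "\<forall>u\<in>verts J. \<forall>v\<in>verts J. adj J u v \<longrightarrow> c u \<noteq> c v"
proof -
  have "finite (verts J)" using assms(1) by (simp add: simple_graph_def)
  then obtain g where g: "bij_betw g (verts J) {0..<card (verts J)}"
    using ex_bij_betw_finite_nat by blast
  then have "(\<forall>v\<in>verts J. g v < card (verts J)) \<and>
      (\<forall>u\<in>verts J. \<forall>v\<in>verts J. adj J u v \<longrightarrow> g u \<noteq> g v)"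
    using adj_irrefl[OF assms(1)] by (auto simp: bij_betw_def inj_on_def)
  then have "\<exists>k (c :: 'a \<Rightarrow> nat). (\<forall>v\<in>verts J. c v < k) \<and>
      (\<forall>u\<in>verts J. \<forall>v\<in>verts J. adj J u v \<longrightarrow> c u \<noteq> c v)"
    by blast
  then have "\<exists>c :: 'a \<Rightarrow> nat. (\<forall>v\<in>verts J. c v < chromatic_number J) \<and>
      (\<forall>u\<in>verts J. \<forall>v\<in>verts J. adj J u v \<longrightarrow> c u \<noteq> c v)"
    unfolding chromatic_number_def by (rule LeastI_ex)
  then show ?thesis using that assms(2) by (meson less_le_trans)
qed

lemma coloured_nat_graph_relabel:
  assumes J: "simple_graph J" and g: "bij_betw g (verts J) {..<N}"
    and c_less: "\<forall>v\<in>verts J. c v < m"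
    and c_proper: "\<forall>u\<in>verts J. \<forall>v\<in>verts J. adj J u v \<longrightarrow> c u \<noteq> c v"
  shows "coloured_nat_graph N m
    (\<lambda>x y. x < N \<and> y < N \<and> adj J (inv_into (verts J) g x) (inv_into (verts J) g y))
    (c \<circ> inv_into (verts J) g)"
proof
  let ?h = "inv_into (verts J) g"
  have h: "?h x \<in> verts J" if "x < N" for x
    using g that by (metis bij_betw_def inv_into_into lessThan_iff)
  show "y < N \<and> x < N \<and> adj J (?h y) (?h x)" if "x < N \<and> y < N \<and> adj J (?h x) (?h y)" for x y
    using that adj_sym by metis
  show "x < N \<and> y < N \<and> (c \<circ> ?h) x \<noteq> (c \<circ> ?h) y" if "x < N \<and> y < N \<and> adj J (?h x) (?h y)" for x y
    using that h c_proper by auto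
  show "(c \<circ> ?h) x < m" if "x < N" for x
    using h[OF that] c_less by simp
qed

lemma induced_embedding_relabel:
  assumes g: "bij_betw g (verts J) {..<N}" and V: "{..<N} \<subseteq> verts G"
    and adj: "\<forall>x<N. \<forall>y<N. adj G x y \<longleftrightarrow> adj J (inv_into (verts J) g x) (inv_into (verts J) g y)"
  shows "induced_embedding J G g"
  unfolding induced_embedding_def
proof (intro conjI ballI)
  have image: "g ` verts J = {..<N}" using g by (simp add: bij_betw_def)
  then show "g ` verts J \<subseteq> verts G" using V by simp
  show "inj_on g (verts J)" using g by (rule bij_betw_imp_inj_on)
  fix u v assume uv: "u \<in> verts J" "v \<in> verts J"
  then have "g u < N" "g v < N" using image by auto
  then show "adj J u v \<longleftrightarrow> adj G (g u) (g v)"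
    using adj bij_betw_inv_into_left[OF g uv(1)] bij_betw_inv_into_left[OF g uv(2)] by simp
qed

theorem lemma8:
  fixes J :: "'a graph" and m :: nat
  assumes "simple_graph J"
    and "m \<ge> chromatic_number J"
  shows "\<exists>(G :: nat graph) f. simple_graph G \<and> connected_graph G \<and>
           induced_embedding J G f \<and>
           local_metric_dim G = m \<and>
           (\<exists>B. local_metric_basis G B \<and> B \<inter> f ` verts J = {})"
proof -
  let ?N = "card (verts J)"
  obtain c :: "'a \<Rightarrow> nat" where c: "\<forall>v\<in>verts J. c v < m"
    "\<forall>u\<in>verts J. \<forall>v\<in>verts J. adj J u v \<longrightarrow> c u \<noteq> c v"
    using proper_colouring_le_chromatic_number[OF assms] by blast
  have "finite (verts J)" using assms(1) by (simp add: simple_graph_def)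
  then obtain g where g: "bij_betw g (verts J) {..<?N}"
    using ex_bij_betw_finite_nat atLeast0LessThan by metis
  let ?h = "inv_into (verts J) g"
  interpret coloured_nat_graph ?N m "\<lambda>x y. x < ?N \<and> y < ?N \<and> adj J (?h x) (?h y)" "c \<circ> ?h"
    by (rule coloured_nat_graph_relabel[OF assms(1) g c])
  obtain G B where G: "basis_avoiding_extension G B"
    using basis_avoiding_extension_exists by blast
  then have "induced_embedding J G g"
    by (intro induced_embedding_relabel[OF g]) (auto simp: basis_avoiding_extension_def)
  moreover have "g ` verts J = {..<?N}" using g by (simp add: bij_betw_def)
  ultimately show ?thesis
    using G unfolding basis_avoiding_extension_def by (intro exI[of _ G] exI[of _ g]) auto
qed

end
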